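(* Let $(\Omega,\mathcal F,\mathbb P)$ be a probability space. For each $N\in\mathbb N$ let $\{t_j\}_{j\in\mathbb N}=\{t_j^{(N)}\}_{j\in\mathbb N}$ be a sequence of positive random variables on it (dependence on $N$ suppressed) satisfying: (i) $\mathbb E(t_i)=\frac1N$ for all $i$ and all $N$; (ii) there exist $r>0$ and a constant $\tilde C>0$ such that $\mathbb E(t_i^{2+r})\le \frac{\tilde C}{N^{2+r}}$ for all $i$ and all $N$; (iii) for all $m\in\mathbb N$ (and all $N$), the vector $(t_1,\dots,t_m)$ is negatively superadditive dependent. Let $\tau_k=\sum_{j=1}^k t_j$. Then, almost surely as $N\to\infty$, $$\frac1N\sum_{k=1}^N\tau_k^2\to\frac13.$$
   Context: A function $\phi:\mathbb R^m\to\mathbb R$ is superadditive if $\phi(x\vee y)+\phi(x\wedge y)\ge\phi(x)+\phi(y)$ for all $x,y\in\mathbb R^m$, where $\vee$ and $\wedge$ denote componentwise maximum and minimum. A random vector $(X_1,\dots,X_m)$ is negatively superadditive dependent (NSD) if for every superadditive $\phi$ such that the expectation $\mathbb E\phi(X_1,\dots,X_m)$ exists, $\mathbb E\phi(X_1,\dots,X_m)\le\mathbb E\phi(X_1^*,\dots,X_m^* )$, where $X_1^*,\dots,X_m^*$ are independent and $X_i^*$ has the same distribution as $X_i$ for each $i$. *)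

theory Defs
  imports "HOL-Probability.Probability"
begin

text \<open>Vectors in R^m are represented as extensional functions on the index
set {1..m}, i.e. elements of PiE {1..m} (\<lambda>_. UNIV); componentwise max/min
are restricted to {1..m}.\<close>

definition vmax :: "nat \<Rightarrow> (nat \<Rightarrow> real) \<Rightarrow> (nat \<Rightarrow> real) \<Rightarrow> (nat \<Rightarrow> real)" where
  "vmax m x y = (\<lambda>i\<in>{1..m}. max (x i) (y i))"

definition vmin :: "nat \<Rightarrow> (nat \<Rightarrow> real) \<Rightarrow> (nat \<Rightarrow> real) \<Rightarrow> (nat \<Rightarrow> real)" where
  "vmin m x y = (\<lambda>i\<in>{1..m}. min (x i) (y i))"

definition superadditive :: "nat \<Rightarrow> ((nat \<Rightarrow> real) \<Rightarrow> real) \<Rightarrow> bool" where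
  "superadditive m \<phi> \<longleftrightarrow>
     (\<forall>x\<in>PiE {1..m} (\<lambda>_. UNIV). \<forall>y\<in>PiE {1..m} (\<lambda>_. UNIV).
        \<phi> (vmax m x y) + \<phi> (vmin m x y) \<ge> \<phi> x + \<phi> y)"

text \<open>The independent copy (X_1^*, ..., X_m^*) is realised by the product of the marginal
distributions.  "The expectation exists" is read as integrability on both sides.\<close>

definition NSD :: "'a measure \<Rightarrow> (nat \<Rightarrow> 'a \<Rightarrow> real) \<Rightarrow> nat \<Rightarrow> bool" where
  "NSD M X m \<longleftrightarrow>
     (\<forall>\<phi>. superadditive m \<phi> \<and>
          \<phi> \<in> borel_measurable (PiM {1..m} (\<lambda>_. borel)) \<and>
          integrable M (\<lambda>\<omega>. \<phi> (\<lambda>i\<in>{1..m}. X i \<omega>)) \<and>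
          integrable (PiM {1..m} (\<lambda>i. distr M borel (X i))) \<phi>
        \<longrightarrow> (\<integral>\<omega>. \<phi> (\<lambda>i\<in>{1..m}. X i \<omega>) \<partial>M)
              \<le> (\<integral>x. \<phi> x \<partial>(PiM {1..m} (\<lambda>i. distr M borel (X i)))))"

end

theory Submission
  imports Defs "HOL-Real_Asymp.Real_Asymp"
begin

(*
  Truncate every step at the level L = N powr (-r / (2 (2 + r))) and centre it. For monotone g_i the
  function x |-> exp (s * sum_i g_i (x_i)) is superadditive (the inner sum is modular and exp is
  convex), so negative superadditive dependence bounds the moment generating function of a centred
  truncated partial sum by the product of the individual ones; a Bernstein-type estimate for
  variables in [0, L] then gives the tail bound 2 exp (-delta^2 / (8 L)). Markov's inequality for the
  (2 + r)-th moments controls both the probability that some step exceeds L and the bias caused by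
  truncating. All these bounds are summable in N, so by Borel-Cantelli almost surely
  max_k |tau_k - k / N| tends to 0, and then (1/N) sum_k tau_k^2 behaves like the Riemann sum
  (1/N) sum_k (k/N)^2 of x^2 over [0, 1], which tends to 1/3.
*)

definition truncate :: "real \<Rightarrow> real \<Rightarrow> real" where
  "truncate L x = min (max x 0) L"

lemma mono_truncate: "mono (truncate L)"
  by (auto simp: mono_def truncate_def)

lemma borel_measurable_truncate [measurable]: "truncate L \<in> borel_measurable borel"
  using mono_truncate by (rule borel_measurable_mono)

lemma abs_truncate_le: "L \<ge> 0 \<Longrightarrow> \<bar>truncate L x\<bar> \<le> L"
  by (auto simp: truncate_def)

lemma exp_add_exp_le_exp_add_exp:
  fixes a b u v :: real
  assumes "a + b = u + v" "v \<le> b" "b \<le> u"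
  shows "exp a + exp b \<le> exp u + exp v"
proof -
  have "exp a - exp v = exp v * (exp (u - b) - 1)" "exp u - exp b = exp b * (exp (u - b) - 1)"
    using assms(1) by (simp_all add: algebra_simps flip: exp_add)
  moreover have "exp v * (exp (u - b) - 1) \<le> exp b * (exp (u - b) - 1)"
    using assms(2,3) by (intro mult_right_mono) auto
  ultimately show ?thesis by linarith
qed

lemma abs_exp_mult_le:
  fixes s z c :: real
  assumes "\<bar>z\<bar> \<le> c"
  shows "\<bar>exp (s * z)\<bar> \<le> exp (\<bar>s\<bar> * c)"
proof -
  have "s * z \<le> \<bar>s\<bar> * c"
    using assms by (metis abs_ge_self abs_mult abs_ge_zero mult_left_mono order_trans)
  then show ?thesis by simp
qed

lemma superadditive_exp_sum:
  fixes g :: "nat \<Rightarrow> real \<Rightarrow> real"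
  assumes mono: "\<And>i. mono (g i)"
  shows "superadditive k (\<lambda>x. exp (s * (\<Sum>i\<in>{1..k}. g i (x i))))"
  unfolding superadditive_def
proof (intro ballI)
  fix x y :: "nat \<Rightarrow> real"
  define G where "G z = (\<Sum>i\<in>{1..k}. g i (z i))" for z
  have modular: "G (vmax k x y) + G (vmin k x y) = G x + G y"
    unfolding G_def vmax_def vmin_def sum.distrib[symmetric]
    by (intro sum.cong) (auto simp: max_def min_def)
  have ordered: "G (vmin k x y) \<le> G y" "G y \<le> G (vmax k x y)"
    unfolding G_def vmax_def vmin_def by (auto intro!: sum_mono monoD[OF mono])
  show "exp (s * G x) + exp (s * G y) \<le> exp (s * G (vmax k x y)) + exp (s * G (vmin k x y))"
  proof (cases "s \<ge> 0")
    case True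
    with modular ordered show ?thesis
      by (intro exp_add_exp_le_exp_add_exp) (auto simp flip: distrib_left intro: mult_left_mono)
  next
    case False
    with modular ordered show ?thesis
      using exp_add_exp_le_exp_add_exp[of "s * G x" "s * G y" "s * G (vmin k x y)" "s * G (vmax k x y)"]
      by (auto simp flip: distrib_left intro: mult_left_mono_neg)
  qed
qed

lemma integral_PiM_distr_prod:
  fixes f :: "nat \<Rightarrow> real \<Rightarrow> real"
  assumes "prob_space M" "finite I"
    and X: "\<And>i. i \<in> I \<Longrightarrow> X i \<in> borel_measurable M"
    and f: "\<And>i. i \<in> I \<Longrightarrow> f i \<in> borel_measurable borel"
    and int: "\<And>i. i \<in> I \<Longrightarrow> integrable M (\<lambda>\<omega>. f i (X i \<omega>))"
  shows "(\<integral>x. (\<Prod>i\<in>I. f i (x i)) \<partial>PiM I (\<lambda>i. distr M borel (X i)))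
           = (\<Prod>i\<in>I. \<integral>\<omega>. f i (X i \<omega>) \<partial>M)"
proof -
  interpret prob_space M by fact
  \<comment> \<open>Outside I the marginals are replaced by point masses, so that every factor is a
    probability space, as \<open>product_sigma_finite\<close> requires.\<close>
  define Y where "Y i = (if i \<in> I then X i else (\<lambda>_. 0))" for i
  have [measurable]: "Y i \<in> borel_measurable M" for i
    using X by (simp add: Y_def)
  interpret Y: prob_space "distr M borel (Y i)" for i
    by (intro prob_space_distr) simp
  interpret product_sigma_finite "\<lambda>i. distr M borel (Y i)" ..
  have "PiM I (\<lambda>i. distr M borel (X i)) = PiM I (\<lambda>i. distr M borel (Y i))"
    by (intro PiM_cong) (auto simp: Y_def)
  also have "(\<integral>x. (\<Prod>i\<in>I. f i (x i)) \<partial>\<dots>) = (\<Prod>i\<in>I. \<integral>y. f i y \<partial>distr M borel (Y i))"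
    using assms(2) int f by (intro product_integral_prod) (auto simp: integrable_distr_eq[OF X] Y_def)
  also have "\<dots> = (\<Prod>i\<in>I. \<integral>\<omega>. f i (X i \<omega>) \<partial>M)"
    using f by (intro prod.cong) (auto simp: integral_distr[OF X] Y_def)
  finally show ?thesis .
qed

lemma NSD_integral_le_PiM_of_bounded:
  assumes "prob_space M" and nsd: "NSD M X k"
    and X: "\<And>i. i \<in> {1..k} \<Longrightarrow> X i \<in> borel_measurable M"
    and superadd: "superadditive k \<phi>"
    and meas: "\<phi> \<in> borel_measurable (PiM {1..k} (\<lambda>_. borel))" and bounded: "\<And>x. \<bar>\<phi> x\<bar> \<le> B"
  shows "(\<integral>\<omega>. \<phi> (\<lambda>i\<in>{1..k}. X i \<omega>) \<partial>M) \<le> (\<integral>x. \<phi> x \<partial>PiM {1..k} (\<lambda>i. distr M borel (X i)))"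
proof -
  interpret prob_space M by fact
  interpret P: prob_space "PiM {1..k} (\<lambda>i. distr M borel (X i))"
    using X by (intro prob_space_PiM prob_space_distr) auto
  have "sets (PiM {1..k} (\<lambda>i. distr M borel (X i))) = sets (PiM {1..k} (\<lambda>_. borel))"
    by (intro sets_PiM_cong) auto
  then have "integrable (PiM {1..k} (\<lambda>i. distr M borel (X i))) \<phi>"
    using meas bounded by (intro P.integrable_const_bound[where B=B]) auto
  moreover have "integrable M (\<lambda>\<omega>. \<phi> (\<lambda>i\<in>{1..k}. X i \<omega>))"
    using bounded X by (intro integrable_const_bound[where B=B] AE_I2 measurable_compose[OF _ meas]
        measurable_restrict) auto
  ultimately show ?thesis
    using nsd superadd meas unfolding NSD_def by blast
qed

lemma NSD_integral_exp_sum_le_prod: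
  fixes g :: "nat \<Rightarrow> real \<Rightarrow> real"
  assumes "prob_space M" and nsd: "NSD M X k"
    and X: "\<And>i. i \<in> {1..k} \<Longrightarrow> X i \<in> borel_measurable M"
    and mono: "\<And>i. mono (g i)" and bounded: "\<And>i y. \<bar>g i y\<bar> \<le> B i"
  shows "(\<integral>\<omega>. exp (s * (\<Sum>i\<in>{1..k}. g i (X i \<omega>))) \<partial>M)
           \<le> (\<Prod>i\<in>{1..k}. \<integral>\<omega>. exp (s * g i (X i \<omega>)) \<partial>M)"
proof -
  interpret prob_space M by fact
  have [measurable]: "g i \<in> borel_measurable borel" for i
    using mono by (rule borel_measurable_mono)
  have bound: "\<bar>exp (s * (\<Sum>i\<in>{1..k}. g i (x i)))\<bar> \<le> exp (\<bar>s\<bar> * (\<Sum>i\<in>{1..k}. B i))" for x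
    using bounded by (intro abs_exp_mult_le order_trans[OF sum_abs] sum_mono)
  have "(\<integral>\<omega>. exp (s * (\<Sum>i\<in>{1..k}. g i (X i \<omega>))) \<partial>M)
          = (\<integral>\<omega>. exp (s * (\<Sum>i\<in>{1..k}. g i ((\<lambda>i\<in>{1..k}. X i \<omega>) i))) \<partial>M)"
    by (intro Bochner_Integration.integral_cong refl arg_cong[where f=exp] arg_cong[where f="(*) s"] sum.cong) auto
  also have "\<dots> \<le> (\<integral>x. exp (s * (\<Sum>i\<in>{1..k}. g i (x i))) \<partial>PiM {1..k} (\<lambda>i. distr M borel (X i)))"
    by (rule NSD_integral_le_PiM_of_bounded[OF assms(1) nsd X superadditive_exp_sum[OF mono] _ bound])
       measurable
  also have "\<dots> = (\<Prod>i\<in>{1..k}. \<integral>\<omega>. exp (s * g i (X i \<omega>)) \<partial>M)"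
  proof -
    have int_factor: "integrable M (\<lambda>\<omega>. exp (s * g i (X i \<omega>)))" if "i \<in> {1..k}" for i
    proof (rule integrable_const_bound[where B="exp (\<bar>s\<bar> * B i)"])
      show "AE \<omega> in M. norm (exp (s * g i (X i \<omega>))) \<le> exp (\<bar>s\<bar> * B i)"
        using abs_exp_mult_le[OF bounded] by simp
    qed (use X[OF that] in measurable)
    show ?thesis
      by (simp only: sum_distrib_left exp_sum[OF finite_atLeastAtMost])
         (rule integral_PiM_distr_prod[OF assms(1)], use X int_factor in auto)
  qed
  finally show ?thesis .
qed

lemma exp_le_quadratic_bound:
  fixes x :: real
  assumes "\<bar>x\<bar> \<le> 1"
  shows "exp x \<le> 1 + x + x\<^sup>2"
proof (cases "x \<ge> 0")
  case True
  then show ?thesis using exp_bound assms by auto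
next
  case False
  then have "1 \<le> (1 - x) * (1 + x + x\<^sup>2)"
    using mult_nonpos_nonneg[of x "x * x"] by (simp add: algebra_simps power2_eq_square)
  then have "inverse (1 - x) \<le> 1 + x + x\<^sup>2"
    using False by (simp add: field_simps)
  moreover have "inverse (exp (- x)) \<le> inverse (1 - x)"
    using False exp_ge_add_one_self[of "- x"] by (intro le_imp_inverse_le) auto
  then have "exp x \<le> inverse (1 - x)"
    by (simp add: exp_minus)
  ultimately show ?thesis by linarith
qed

lemma integral_exp_centered_le:
  fixes Z :: "'a \<Rightarrow> real"
  assumes "prob_space M" and Z[measurable]: "Z \<in> borel_measurable M"
    and bounded: "\<And>\<omega>. \<omega> \<in> space M \<Longrightarrow> 0 \<le> Z \<omega> \<and> Z \<omega> \<le> L"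
    and s: "\<bar>s\<bar> * L \<le> 1"
  shows "(\<integral>\<omega>. exp (s * (Z \<omega> - (\<integral>\<omega>. Z \<omega> \<partial>M))) \<partial>M) \<le> exp (2 * s\<^sup>2 * L * (\<integral>\<omega>. Z \<omega> \<partial>M))"
proof -
  interpret prob_space M by fact
  define c where "c = (\<integral>\<omega>. Z \<omega> \<partial>M)"
  have int_Z: "integrable M Z"
    using bounded by (intro integrable_const_bound[where B=L] AE_I2) auto
  have c: "0 \<le> c" "c \<le> L"
    using bounded integral_mono[OF int_Z, of "\<lambda>_. L"]
    by (auto simp: c_def prob_space intro!: integral_nonneg_AE)
  have dist: "\<bar>Z \<omega> - c\<bar> \<le> L" if "\<omega> \<in> space M" for \<omega>
    using bounded[OF that] c by auto
  have int_exp: "integrable M (\<lambda>\<omega>. exp (s * (Z \<omega> - c)))"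
    using abs_exp_mult_le[OF dist] by (intro integrable_const_bound[where B="exp (\<bar>s\<bar> * L)"] AE_I2) auto
  have pointwise: "exp (s * (Z \<omega> - c)) \<le> 1 + s * (Z \<omega> - c) + s\<^sup>2 * L * (Z \<omega> + c)"
    if "\<omega> \<in> space M" for \<omega>
  proof -
    note dist = dist[OF that]
    have "\<bar>s * (Z \<omega> - c)\<bar> \<le> 1"
      using mult_left_mono[OF dist, of "\<bar>s\<bar>"] s by (simp add: abs_mult)
    moreover have "(Z \<omega> - c)\<^sup>2 \<le> L * (Z \<omega> + c)"
    proof -
      have "(Z \<omega> - c)\<^sup>2 = \<bar>Z \<omega> - c\<bar> * \<bar>Z \<omega> - c\<bar>"
        by (simp add: power2_eq_square)
      also have "\<dots> \<le> L * (Z \<omega> + c)"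
        using dist bounded[OF that] c by (intro mult_mono) auto
      finally show ?thesis .
    qed
    ultimately show ?thesis
      using exp_le_quadratic_bound[of "s * (Z \<omega> - c)"] mult_left_mono[of _ _ "s\<^sup>2"]
      by (force simp: power_mult_distrib mult.assoc)
  qed
  have "(\<integral>\<omega>. exp (s * (Z \<omega> - c)) \<partial>M) \<le> (\<integral>\<omega>. 1 + s * (Z \<omega> - c) + s\<^sup>2 * L * (Z \<omega> + c) \<partial>M)"
    using pointwise int_Z int_exp by (intro integral_mono_AE AE_I2) auto
  also have "\<dots> = 1 + 2 * s\<^sup>2 * L * c"
    using int_Z by (simp add: c_def algebra_simps prob_space)
  also have "\<dots> \<le> exp (2 * s\<^sup>2 * L * c)"
    by (rule exp_ge_add_one_self)
  finally show ?thesis unfolding c_def .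
qed

lemma NSD_integral_exp_truncated_sum_le:
  assumes "prob_space M" and nsd: "NSD M X k"
    and X: "\<And>j. j \<in> {1..k} \<Longrightarrow> X j \<in> borel_measurable M"
    and c: "\<And>j. c j = (\<integral>\<omega>. truncate L (X j \<omega>) \<partial>M)"
    and L: "0 \<le> L" and s: "\<bar>s\<bar> * L \<le> 1"
  shows "(\<integral>\<omega>. exp (s * (\<Sum>j\<in>{1..k}. truncate L (X j \<omega>) - c j)) \<partial>M)
           \<le> exp (2 * s\<^sup>2 * L * (\<Sum>j\<in>{1..k}. c j))"
proof -
  interpret prob_space M by fact
  have "(\<integral>\<omega>. exp (s * (\<Sum>j\<in>{1..k}. truncate L (X j \<omega>) - c j)) \<partial>M)
          \<le> (\<Prod>j\<in>{1..k}. \<integral>\<omega>. exp (s * (truncate L (X j \<omega>) - c j)) \<partial>M)"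
    using L abs_truncate_le[OF L]
    by (intro NSD_integral_exp_sum_le_prod[OF assms(1) nsd X, where B="\<lambda>j. L + \<bar>c j\<bar>"])
       (auto simp: mono_def truncate_def)
  also have "\<dots> \<le> (\<Prod>j\<in>{1..k}. exp (2 * s\<^sup>2 * L * c j))"
  proof (rule prod_mono)
    fix j assume j: "j \<in> {1..k}"
    have "(\<integral>\<omega>. exp (s * (truncate L (X j \<omega>) - c j)) \<partial>M) \<le> exp (2 * s\<^sup>2 * L * c j)"
      unfolding c using X[OF j] L s by (intro integral_exp_centered_le[OF assms(1)]) (auto simp: truncate_def)
    then show "0 \<le> (\<integral>\<omega>. exp (s * (truncate L (X j \<omega>) - c j)) \<partial>M) \<and>
        (\<integral>\<omega>. exp (s * (truncate L (X j \<omega>) - c j)) \<partial>M) \<le> exp (2 * s\<^sup>2 * L * c j)"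
      by (auto intro: integral_nonneg_AE)
  qed
  also have "\<dots> = exp (2 * s\<^sup>2 * L * (\<Sum>j\<in>{1..k}. c j))"
    by (simp add: exp_sum sum_distrib_left)
  finally show ?thesis .
qed

lemma NSD_truncated_sum_one_sided_tail:
  assumes "prob_space M" and nsd: "NSD M X k"
    and X: "\<And>j. j \<in> {1..k} \<Longrightarrow> X j \<in> borel_measurable M"
    and c: "\<And>j. c j = (\<integral>\<omega>. truncate L (X j \<omega>) \<partial>M)"
    and L: "0 < L" and \<delta>: "0 < \<delta>" "\<delta> \<le> 4" and sum_c: "(\<Sum>j\<in>{1..k}. c j) \<le> 1"
    and \<sigma>: "\<bar>\<sigma>\<bar> = 1"
  shows "measure M {\<omega> \<in> space M. \<delta> \<le> \<sigma> * (\<Sum>j\<in>{1..k}. truncate L (X j \<omega>) - c j)}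
           \<le> exp (- \<delta>\<^sup>2 / (8 * L))"
proof -
  interpret prob_space M by fact
  define S where "S \<omega> = (\<Sum>j\<in>{1..k}. truncate L (X j \<omega>) - c j)" for \<omega>
  \<comment> \<open>This \<open>\<theta>\<close> minimises the Chernoff exponent \<open>2 \<theta>\<^sup>2 L - \<theta> \<delta>\<close>.\<close>
  define \<theta> where "\<theta> = \<delta> / (4 * L)"
  have \<theta>: "0 < \<theta>" "\<theta> * L \<le> 1"
    using L \<delta> by (simp_all add: \<theta>_def)
  have [measurable]: "S \<in> borel_measurable M"
    unfolding S_def using X by (intro borel_measurable_sum borel_measurable_diff) auto
  have "\<bar>S \<omega>\<bar> \<le> (\<Sum>j\<in>{1..k}. L + \<bar>c j\<bar>)" for \<omega>
    unfolding S_def using abs_truncate_le[of L] L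
    by (intro order_trans[OF sum_abs] sum_mono) (auto intro: order_trans[OF abs_triangle_ineq4])
  then have int: "integrable M (\<lambda>\<omega>. exp (\<theta> * (\<sigma> * S \<omega>)))"
    using abs_exp_mult_le
    by (intro integrable_const_bound[where B="exp (\<bar>\<theta> * \<sigma>\<bar> * (\<Sum>j\<in>{1..k}. L + \<bar>c j\<bar>))"] AE_I2)
       (auto simp: mult.assoc[symmetric])
  have "(\<integral>\<omega>. exp ((\<theta> * \<sigma>) * S \<omega>) \<partial>M) \<le> exp (2 * (\<theta> * \<sigma>)\<^sup>2 * L * (\<Sum>j\<in>{1..k}. c j))"
    unfolding S_def using \<sigma> \<theta> L
    by (intro NSD_integral_exp_truncated_sum_le[OF assms(1) nsd X c]) (auto simp: abs_mult)
  also have "\<dots> \<le> exp (2 * \<theta>\<^sup>2 * L)"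
    using power2_abs[of \<sigma>] \<sigma> L mult_left_mono[OF sum_c, of "2 * \<theta>\<^sup>2 * L"]
    by (simp add: power_mult_distrib)
  finally have mgf: "(\<integral>\<omega>\<in>space M. exp (\<theta> * (\<sigma> * S \<omega>)) \<partial>M) \<le> exp (2 * \<theta>\<^sup>2 * L)"
    by (simp add: set_integral_space[OF int] mult.assoc)
  have "measure M {\<omega> \<in> space M. \<delta> \<le> \<sigma> * S \<omega>} \<le> exp (- \<theta> * \<delta>) * (\<integral>\<omega>\<in>space M. exp (\<theta> * (\<sigma> * S \<omega>)) \<partial>M)"
  proof (rule Chernoff_ineq_ge)
    show "set_integrable M (space M) (\<lambda>\<omega>. exp (\<theta> * (\<sigma> * S \<omega>)))"
      unfolding set_integrable_def by (rule Bochner_Integration.integrable_cong[OF refl, THEN iffD2, OF _ int]) simp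
  qed (use \<theta> in auto)
  also have "\<dots> \<le> exp (- \<theta> * \<delta>) * exp (2 * \<theta>\<^sup>2 * L)"
    using mgf by simp
  also have "\<dots> = exp (- \<delta>\<^sup>2 / (8 * L))"
    using L by (simp add: \<theta>_def flip: exp_add) (simp add: field_simps power2_eq_square)
  finally show ?thesis unfolding S_def .
qed

lemma NSD_truncated_sum_deviation:
  assumes "prob_space M" and nsd: "NSD M X k"
    and X: "\<And>j. j \<in> {1..k} \<Longrightarrow> X j \<in> borel_measurable M"
    and c: "\<And>j. c j = (\<integral>\<omega>. truncate L (X j \<omega>) \<partial>M)"
    and L: "0 < L" and \<delta>: "0 < \<delta>" "\<delta> \<le> 4" and sum_c: "(\<Sum>j\<in>{1..k}. c j) \<le> 1"
  shows "measure M {\<omega> \<in> space M. \<delta> \<le> \<bar>\<Sum>j\<in>{1..k}. truncate L (X j \<omega>) - c j\<bar>}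
           \<le> 2 * exp (- \<delta>\<^sup>2 / (8 * L))"
proof -
  interpret prob_space M by fact
  define S where "S \<omega> = (\<Sum>j\<in>{1..k}. truncate L (X j \<omega>) - c j)" for \<omega>
  have [measurable]: "S \<in> borel_measurable M"
    unfolding S_def using X by (intro borel_measurable_sum borel_measurable_diff) auto
  have "{\<omega> \<in> space M. \<delta> \<le> \<bar>S \<omega>\<bar>} = {\<omega> \<in> space M. \<delta> \<le> 1 * S \<omega>} \<union> {\<omega> \<in> space M. \<delta> \<le> -1 * S \<omega>}"
    by auto
  then have "measure M {\<omega> \<in> space M. \<delta> \<le> \<bar>S \<omega>\<bar>}
      \<le> measure M {\<omega> \<in> space M. \<delta> \<le> 1 * S \<omega>} + measure M {\<omega> \<in> space M. \<delta> \<le> -1 * S \<omega>}"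
    by (simp add: measure_Un_le)
  also have "\<dots> \<le> 2 * exp (- \<delta>\<^sup>2 / (8 * L))"
    using NSD_truncated_sum_one_sided_tail[OF assms, of 1] NSD_truncated_sum_one_sided_tail[OF assms, of "-1"]
    unfolding S_def by simp
  finally show ?thesis unfolding S_def .
qed

lemma integrable_integral_le_of_nn_integral_le:
  fixes f :: "'a \<Rightarrow> real"
  assumes [measurable]: "f \<in> borel_measurable M" and nonneg: "\<And>\<omega>. \<omega> \<in> space M \<Longrightarrow> 0 \<le> f \<omega>"
    and le: "(\<integral>\<^sup>+\<omega>. ennreal (f \<omega>) \<partial>M) \<le> ennreal K" and "0 \<le> K"
  shows "integrable M f" "(\<integral>\<omega>. f \<omega> \<partial>M) \<le> K"
proof -
  show "integrable M f"
    using le_less_trans[OF le ennreal_less_top] nonneg by (intro integrableI_nonneg AE_I2) auto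
  have "(\<integral>\<omega>. f \<omega> \<partial>M) = enn2real (\<integral>\<^sup>+\<omega>. ennreal (f \<omega>) \<partial>M)"
    using nonneg by (intro integral_eq_nn_integral AE_I2) auto
  also have "\<dots> \<le> K"
    using enn2real_mono[OF le] \<open>0 \<le> K\<close> by simp
  finally show "(\<integral>\<omega>. f \<omega> \<partial>M) \<le> K" .
qed

lemma measure_gt_le_moment:
  fixes Y :: "'a \<Rightarrow> real"
  assumes "finite_measure M" and [measurable]: "Y \<in> borel_measurable M"
    and nonneg: "\<And>\<omega>. \<omega> \<in> space M \<Longrightarrow> 0 \<le> Y \<omega>"
    and int: "integrable M (\<lambda>\<omega>. Y \<omega> powr p)" and moment: "(\<integral>\<omega>. Y \<omega> powr p \<partial>M) \<le> K"
    and p: "0 < p" and L: "0 < L"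
  shows "measure M {\<omega> \<in> space M. L < Y \<omega>} \<le> K / L powr p"
proof -
  interpret finite_measure M by fact
  have "measure M {\<omega> \<in> space M. L < Y \<omega>} \<le> measure M {\<omega> \<in> space M. L powr p \<le> Y \<omega> powr p}"
    using L p by (intro finite_measure_mono) (auto intro: powr_mono2)
  also have "\<dots> \<le> (\<integral>\<omega>. Y \<omega> powr p \<partial>M) / L powr p"
    using int L by (intro integral_Markov_inequality_measure[where A="space M"]) auto
  also have "\<dots> \<le> K / L powr p"
    using moment L by (intro divide_right_mono) auto
  finally show ?thesis .
qed

lemma integrable_truncate:
  assumes "finite_measure M" and [measurable]: "Y \<in> borel_measurable M" and L: "0 \<le> L"
  shows "integrable M (\<lambda>\<omega>. truncate L (Y \<omega>))"
proof (rule finite_measure.integrable_const_bound[OF assms(1), where B=L])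
  show "AE \<omega> in M. norm (truncate L (Y \<omega>)) \<le> L"
    using abs_truncate_le[OF L] by simp
qed measurable

lemma integral_truncate_le:
  fixes Y :: "'a \<Rightarrow> real"
  assumes "finite_measure M" and int: "integrable M Y"
    and nonneg: "\<And>\<omega>. \<omega> \<in> space M \<Longrightarrow> 0 \<le> Y \<omega>" and L: "0 \<le> L"
  shows "(\<integral>\<omega>. truncate L (Y \<omega>) \<partial>M) \<le> (\<integral>\<omega>. Y \<omega> \<partial>M)"
  using integrable_truncate[OF assms(1) borel_measurable_integrable[OF int] L] int nonneg
  by (intro integral_mono) (auto simp: truncate_def)

lemma integral_sub_integral_truncate_le:
  fixes Y :: "'a \<Rightarrow> real"
  assumes "finite_measure M" and int: "integrable M Y"
    and nonneg: "\<And>\<omega>. \<omega> \<in> space M \<Longrightarrow> 0 \<le> Y \<omega>"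
    and int_moment: "integrable M (\<lambda>\<omega>. Y \<omega> powr p)" and moment: "(\<integral>\<omega>. Y \<omega> powr p \<partial>M) \<le> K"
    and p: "1 \<le> p" and L: "0 < L"
  shows "(\<integral>\<omega>. Y \<omega> \<partial>M) - (\<integral>\<omega>. truncate L (Y \<omega>) \<partial>M) \<le> K / L powr (p - 1)"
proof -
  have pointwise: "Y \<omega> - truncate L (Y \<omega>) \<le> Y \<omega> powr p / L powr (p - 1)" if "\<omega> \<in> space M" for \<omega>
  proof (cases "Y \<omega> \<le> L")
    case True
    then show ?thesis using nonneg[OF that] by (simp add: truncate_def)
  next
    case False
    then have "Y \<omega> * L powr (p - 1) \<le> Y \<omega> * Y \<omega> powr (p - 1)"
      using L p by (intro mult_left_mono powr_mono2) auto
    also have "\<dots> = Y \<omega> powr p"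
      using False L by (simp add: powr_mult_base)
    finally have "Y \<omega> \<le> Y \<omega> powr p / L powr (p - 1)"
      using L by (simp add: field_simps)
    then show ?thesis
      using False L by (simp add: truncate_def)
  qed
  have "(\<integral>\<omega>. Y \<omega> \<partial>M) - (\<integral>\<omega>. truncate L (Y \<omega>) \<partial>M) = (\<integral>\<omega>. Y \<omega> - truncate L (Y \<omega>) \<partial>M)"
    using integrable_truncate[OF assms(1) borel_measurable_integrable[OF int]] L int by simp
  also have "\<dots> \<le> (\<integral>\<omega>. Y \<omega> powr p / L powr (p - 1) \<partial>M)"
    using integrable_truncate[OF assms(1) borel_measurable_integrable[OF int]] L int int_moment pointwise
    by (intro integral_mono) auto
  also have "\<dots> \<le> K / L powr (p - 1)"
    using moment L by (simp add: divide_right_mono)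
  finally show ?thesis .
qed

lemma tendsto_mean_square_fractions:
  "(\<lambda>N. (1 / real N) * (\<Sum>k=1..N. (real k / real N)\<^sup>2)) \<longlonglongrightarrow> 1 / 3"
proof -
  have sum_squares: "(\<Sum>k=1..N. (real k)\<^sup>2) = real N * (N + 1) * (2 * N + 1) / 6" for N
    by (induction N) (auto simp: algebra_simps power2_eq_square)
  have closed_form: "(real N + 1) * (2 * real N + 1) / (6 * real N ^ 2) = (1 / real N) * (\<Sum>k=1..N. (real k / real N)\<^sup>2)"
    if "N \<ge> 1" for N
  proof -
    have "(1 / real N) * (\<Sum>k=1..N. (real k / real N)\<^sup>2) = (\<Sum>k=1..N. (real k)\<^sup>2) / real N ^ 3"
      by (simp add: power_divide power3_eq_cube power2_eq_square flip: sum_divide_distrib)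
    also have "\<dots> = (real N + 1) * (2 * real N + 1) / (6 * real N ^ 2)"
      unfolding sum_squares using that by (simp add: field_simps power2_eq_square power3_eq_cube)
    finally show ?thesis ..
  qed
  have "(\<lambda>N. (real N + 1) * (2 * real N + 1) / (6 * real N ^ 2)) \<longlonglongrightarrow> 1 / 3"
    by real_asymp
  then show ?thesis
    by (rule Lim_transform_eventually) (use closed_form in \<open>auto simp: eventually_sequentially\<close>)
qed

lemma abs_square_diff_le:
  fixes x y \<epsilon> :: real
  assumes "\<bar>x - y\<bar> \<le> \<epsilon>" "\<epsilon> \<le> 1" "0 \<le> y" "y \<le> 1"
  shows "\<bar>x\<^sup>2 - y\<^sup>2\<bar> \<le> 3 * \<epsilon>"
proof -
  have "\<bar>x\<^sup>2 - y\<^sup>2\<bar> = \<bar>x - y\<bar> * \<bar>x + y\<bar>"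
    by (simp add: power2_eq_square abs_mult[symmetric] algebra_simps)
  also have "\<dots> \<le> \<epsilon> * 3"
  proof (rule mult_mono)
    show "\<bar>x + y\<bar> \<le> 3"
      using assms unfolding abs_le_iff by linarith
  qed (use assms in auto)
  finally show ?thesis
    by simp
qed

lemma tendsto_mean_square_of_uniformly_close:
  fixes x :: "nat \<Rightarrow> nat \<Rightarrow> real"
  assumes close: "\<And>\<epsilon>. \<epsilon> > 0 \<Longrightarrow> eventually (\<lambda>N. \<forall>k\<in>{1..N}. \<bar>x N k - real k / real N\<bar> \<le> \<epsilon>) sequentially"
  shows "(\<lambda>N. (1 / real N) * (\<Sum>k=1..N. (x N k)\<^sup>2)) \<longlonglongrightarrow> 1 / 3"
proof -
  define q where "q N = (1 / real N) * (\<Sum>k=1..N. (real k / real N)\<^sup>2)" for N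
  have "(\<lambda>N. (1 / real N) * (\<Sum>k=1..N. (x N k)\<^sup>2) - q N) \<longlonglongrightarrow> 0"
  proof (rule LIMSEQ_I)
    fix e :: real assume "e > 0"
    define \<epsilon> where "\<epsilon> = min 1 (e / 4)"
    have \<epsilon>: "0 < \<epsilon>" "\<epsilon> \<le> 1" "3 * \<epsilon> < e"
      using \<open>e > 0\<close> by (auto simp: \<epsilon>_def)
    obtain N0 where N0: "\<forall>N\<ge>N0. \<forall>k\<in>{1..N}. \<bar>x N k - real k / real N\<bar> \<le> \<epsilon>"
      using close[OF \<epsilon>(1)] unfolding eventually_sequentially by blast
    have "\<bar>(1 / real N) * (\<Sum>k=1..N. (x N k)\<^sup>2) - q N\<bar> < e" if N: "N \<ge> max N0 1" for N
    proof -
      have square_close: "\<bar>(x N k)\<^sup>2 - (real k / real N)\<^sup>2\<bar> \<le> 3 * \<epsilon>" if k: "k \<in> {1..N}" for k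
      proof (rule abs_square_diff_le)
        show "\<bar>x N k - real k / real N\<bar> \<le> \<epsilon>"
          using N0 N k by simp
      qed (use k \<epsilon> in auto)
      have "\<bar>(1 / real N) * (\<Sum>k=1..N. (x N k)\<^sup>2) - q N\<bar> = (1 / real N) * \<bar>\<Sum>k=1..N. (x N k)\<^sup>2 - (real k / real N)\<^sup>2\<bar>"
        by (simp add: q_def sum_subtractf abs_divide flip: diff_divide_distrib)
      also have "\<dots> \<le> (1 / real N) * (\<Sum>k=1..N. 3 * \<epsilon>)"
        using square_close by (intro mult_left_mono order_trans[OF sum_abs] sum_mono) auto
      also have "\<dots> = 3 * \<epsilon>"
        using N by simp
      finally show ?thesis
        using \<epsilon> by linarith
    qed
    then show "\<exists>N0. \<forall>N\<ge>N0. norm ((1 / real N) * (\<Sum>k=1..N. (x N k)\<^sup>2) - q N - 0) < e"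
      by (intro exI[of _ "max N0 1"]) simp
  qed
  from tendsto_add[OF this tendsto_mean_square_fractions[folded q_def]] show ?thesis
    by simp
qed

lemma mult_divide_powr_powr:
  fixes x c a b d :: real
  assumes "0 < x"
  shows "x * (c / x powr a / (x powr b) powr d) = c * x powr (1 - a - b * d)"
  using assms by (simp add: powr_powr powr_diff powr_add field_simps)

locale nsd_triangular_array = prob_space M
  for M :: "'a measure" and t :: "nat \<Rightarrow> nat \<Rightarrow> 'a \<Rightarrow> real" and r C :: real +
  assumes meas: "\<And>N j. N \<ge> 1 \<Longrightarrow> j \<ge> 1 \<Longrightarrow> t N j \<in> borel_measurable M"
    and pos: "\<And>N j \<omega>. N \<ge> 1 \<Longrightarrow> j \<ge> 1 \<Longrightarrow> \<omega> \<in> space M \<Longrightarrow> t N j \<omega> > 0"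
    and mean: "\<And>N j. N \<ge> 1 \<Longrightarrow> j \<ge> 1 \<Longrightarrow>
                 integrable M (t N j) \<and> (\<integral>\<omega>. t N j \<omega> \<partial>M) = 1 / real N"
    and r_pos: "r > 0" and C_pos: "C > 0"
    and moment: "\<And>N j. N \<ge> 1 \<Longrightarrow> j \<ge> 1 \<Longrightarrow>
                 (\<integral>\<^sup>+\<omega>. ennreal (t N j \<omega> powr (2 + r)) \<partial>M)
                   \<le> ennreal (C / real N powr (2 + r))"
    and nsd: "\<And>N m. N \<ge> 1 \<Longrightarrow> NSD M (t N) m"
begin

text \<open>The exponent of the cutoff makes both \<open>N * P(t > cutoff N) \<sim> N powr (-1 - r/2)\<close> and the
  Chernoff bound \<open>N * exp (-\<delta>\<^sup>2 / (8 * cutoff N))\<close> summable, while the truncation bias still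
  vanishes.\<close>

definition cutoff :: "nat \<Rightarrow> real" where
  "cutoff N = real N powr (- r / (2 * (2 + r)))"

definition trunc_mean :: "nat \<Rightarrow> nat \<Rightarrow> real" where
  "trunc_mean N j = (\<integral>\<omega>. truncate (cutoff N) (t N j \<omega>) \<partial>M)"

definition large_step :: "nat \<Rightarrow> 'a set" where
  "large_step N = (\<Union>j\<in>{1..N}. {\<omega> \<in> space M. cutoff N < t N j \<omega>})"

definition large_deviation :: "real \<Rightarrow> nat \<Rightarrow> 'a set" where
  "large_deviation \<delta> N = (\<Union>k\<in>{1..N}. {\<omega> \<in> space M.
     \<delta> \<le> \<bar>\<Sum>j\<in>{1..k}. truncate (cutoff N) (t N j \<omega>) - trunc_mean N j\<bar>})"

definition exceptional :: "real \<Rightarrow> nat \<Rightarrow> 'a set" where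
  "exceptional \<delta> N = large_step N \<union> large_deviation \<delta> N"

lemma cutoff_pos: "N \<ge> 1 \<Longrightarrow> 0 < cutoff N"
  by (simp add: cutoff_def)

lemma moment_integrable_le:
  assumes "N \<ge> 1" "j \<ge> 1"
  shows "integrable M (\<lambda>\<omega>. t N j \<omega> powr (2 + r))"
    "(\<integral>\<omega>. t N j \<omega> powr (2 + r) \<partial>M) \<le> C / real N powr (2 + r)"
  using integrable_integral_le_of_nn_integral_le[OF _ _ moment[OF assms]] meas[OF assms] C_pos
  by auto

lemma trunc_mean_le: "N \<ge> 1 \<Longrightarrow> j \<ge> 1 \<Longrightarrow> trunc_mean N j \<le> 1 / real N"
  using integral_truncate_le[OF _ conjunct1[OF mean]] pos cutoff_pos mean
  by (fastforce simp: trunc_mean_def finite_measure_axioms less_imp_le)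

lemma mean_sub_trunc_mean_le:
  assumes "N \<ge> 1" "j \<ge> 1"
  shows "1 / real N - trunc_mean N j \<le> C / real N powr (2 + r) / cutoff N powr (1 + r)"
  using integral_sub_integral_truncate_le[OF finite_measure_axioms conjunct1[OF mean[OF assms]] _
      moment_integrable_le[OF assms], of "cutoff N"] pos[OF assms] mean[OF assms] cutoff_pos[OF assms(1)] r_pos
  by (simp add: trunc_mean_def less_imp_le)

lemma sets_large_step: "large_step N \<in> sets M"
  and sets_large_deviation: "large_deviation \<delta> N \<in> sets M"
proof -
  have [measurable]: "t N j \<in> borel_measurable M" if "j \<in> {1..N}" for j
    using meas that by auto
  show "large_step N \<in> sets M"
    unfolding large_step_def by measurable
  show "large_deviation \<delta> N \<in> sets M"
    unfolding large_deviation_def by measurable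
qed

lemma sets_exceptional: "exceptional \<delta> N \<in> sets M"
  using sets_large_step sets_large_deviation by (simp add: exceptional_def)

lemma measure_large_step_le:
  assumes N: "N \<ge> 1"
  shows "measure M (large_step N) \<le> C * real N powr (- (1 + r / 2))"
proof -
  have [measurable]: "t N j \<in> borel_measurable M" if "j \<in> {1..N}" for j
    using meas that by auto
  have "measure M (large_step N) \<le> (\<Sum>j\<in>{1..N}. measure M {\<omega> \<in> space M. cutoff N < t N j \<omega>})"
    unfolding large_step_def by (intro finite_measure_subadditive_finite) auto
  also have "\<dots> \<le> (\<Sum>j\<in>{1..N}. C / real N powr (2 + r) / cutoff N powr (2 + r))"
    using moment_integrable_le pos cutoff_pos[OF N] r_pos
    by (intro sum_mono measure_gt_le_moment[OF finite_measure_axioms]) (auto intro: less_imp_le)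
  also have "\<dots> = real N * (C / real N powr (2 + r) / cutoff N powr (2 + r))"
    by simp
  also have "\<dots> = C * real N powr (1 - (2 + r) - (- r / (2 * (2 + r))) * (2 + r))"
    unfolding cutoff_def using N by (intro mult_divide_powr_powr) auto
  also have "1 - (2 + r) - (- r / (2 * (2 + r))) * (2 + r) = - (1 + r / 2)"
    using r_pos by (simp add: field_simps)
  finally show ?thesis .
qed

lemma measure_large_deviation_le:
  assumes N: "N \<ge> 1" and \<delta>: "0 < \<delta>" "\<delta> \<le> 1"
  shows "measure M (large_deviation \<delta> N) \<le> real N * (2 * exp (- \<delta>\<^sup>2 / (8 * cutoff N)))"
proof -
  have [measurable]: "t N j \<in> borel_measurable M" if "j \<in> {1..N}" for j
    using meas that by auto
  have "measure M (large_deviation \<delta> N) \<le> (\<Sum>k\<in>{1..N}. measure M {\<omega> \<in> space M.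
          \<delta> \<le> \<bar>\<Sum>j\<in>{1..k}. truncate (cutoff N) (t N j \<omega>) - trunc_mean N j\<bar>})"
    unfolding large_deviation_def by (intro finite_measure_subadditive_finite) auto
  also have "\<dots> \<le> (\<Sum>k\<in>{1..N}. 2 * exp (- \<delta>\<^sup>2 / (8 * cutoff N)))"
  proof (intro sum_mono NSD_truncated_sum_deviation[OF prob_space_axioms nsd[OF N]])
    fix k assume k: "k \<in> {1..N}"
    have "(\<Sum>j\<in>{1..k}. trunc_mean N j) \<le> (\<Sum>j\<in>{1..k}. 1 / real N)"
      using N by (intro sum_mono trunc_mean_le) auto
    also have "\<dots> \<le> 1"
      using k by auto
    finally show "(\<Sum>j\<in>{1..k}. trunc_mean N j) \<le> 1" .
  qed (use N \<delta> meas cutoff_pos in \<open>auto simp: trunc_mean_def\<close>)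
  finally show ?thesis
    by simp
qed

lemma measure_exceptional_le:
  assumes "N \<ge> 1" "0 < \<delta>" "\<delta> \<le> 1"
  shows "measure M (exceptional \<delta> N)
           \<le> C * real N powr (- (1 + r / 2)) + real N * (2 * exp (- \<delta>\<^sup>2 / (8 * cutoff N)))"
proof -
  have "measure M (exceptional \<delta> N) \<le> measure M (large_step N) + measure M (large_deviation \<delta> N)"
    unfolding exceptional_def using sets_large_step sets_large_deviation by (rule measure_Un_le)
  then show ?thesis
    using measure_large_step_le[OF assms(1)] measure_large_deviation_le[OF assms] by linarith
qed

lemma summable_measure_exceptional:
  assumes "0 < \<delta>" "\<delta> \<le> 1"
  shows "summable (\<lambda>N. measure M (exceptional \<delta> N))"
proof (rule summable_comparison_test')
  have tails: "summable (\<lambda>N. C * real N powr (- (1 + r / 2)))"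
    using r_pos by (intro summable_mult) (simp add: summable_real_powr_iff)
  have "(\<lambda>N. real N * (2 * exp (- \<delta>\<^sup>2 / (8 * cutoff N)))) \<in> O(\<lambda>N. real N powr (-2))"
    unfolding cutoff_def using assms r_pos by real_asymp
  then have deviations: "summable (\<lambda>N. real N * (2 * exp (- \<delta>\<^sup>2 / (8 * cutoff N))))"
    by (rule summable_comparison_test_bigo[rotated]) (simp add: summable_real_powr_iff)
  show "summable (\<lambda>N. C * real N powr (- (1 + r / 2)) + real N * (2 * exp (- \<delta>\<^sup>2 / (8 * cutoff N))))"
    using tails deviations by (rule summable_add)
  show "norm (measure M (exceptional \<delta> N))
          \<le> C * real N powr (- (1 + r / 2)) + real N * (2 * exp (- \<delta>\<^sup>2 / (8 * cutoff N)))"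
    if "N \<ge> 1" for N
    using measure_exceptional_le[OF that assms] by simp
qed

definition bias_bound :: "nat \<Rightarrow> real" where
  "bias_bound N = real N * (C / real N powr (2 + r) / cutoff N powr (1 + r))"

lemma bias_bound_tendsto_zero: "bias_bound \<longlonglongrightarrow> 0"
proof -
  define e where "e = 1 - (2 + r) - (- r / (2 * (2 + r))) * (1 + r)"
  have "0 < 4 + 5 * r + r * r"
    using r_pos by (intro add_pos_nonneg) auto
  then have "e < 0"
    using r_pos by (simp add: e_def field_simps)
  then have "(\<lambda>N. C * real N powr e) \<longlonglongrightarrow> 0"
    by real_asymp
  moreover have closed_form: "C * real N powr e = bias_bound N" if "N \<ge> 1" for N
    unfolding bias_bound_def cutoff_def e_def using that by (intro mult_divide_powr_powr[symmetric]) auto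
  ultimately show ?thesis
    by (elim Lim_transform_eventually) (auto simp: eventually_sequentially)
qed

lemma partial_sum_close_outside_exceptional:
  assumes N: "N \<ge> 1" and \<omega>: "\<omega> \<in> space M - exceptional \<delta> N" and k: "k \<in> {1..N}"
  shows "\<bar>(\<Sum>j=1..k. t N j \<omega>) - real k / real N\<bar> \<le> \<delta> + bias_bound N"
proof -
  have truncated: "truncate (cutoff N) (t N j \<omega>) = t N j \<omega>" if "j \<in> {1..k}" for j
  proof -
    have j: "j \<in> {1..N}"
      using that k by auto
    then have "t N j \<omega> \<le> cutoff N"
      using \<omega> unfolding exceptional_def large_step_def by force
    then show ?thesis
      using pos[of N j \<omega>] \<omega> j by (simp add: truncate_def)
  qed
  have "\<bar>\<Sum>j=1..k. truncate (cutoff N) (t N j \<omega>) - trunc_mean N j\<bar> < \<delta>"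
    using \<omega> k unfolding exceptional_def large_deviation_def by force
  then have deviation: "\<bar>\<Sum>j=1..k. t N j \<omega> - trunc_mean N j\<bar> < \<delta>"
    by (simp add: truncated)
  have bias: "0 \<le> (\<Sum>j=1..k. 1 / real N - trunc_mean N j)"
      "(\<Sum>j=1..k. 1 / real N - trunc_mean N j) \<le> bias_bound N"
  proof -
    show "0 \<le> (\<Sum>j=1..k. 1 / real N - trunc_mean N j)"
      using N trunc_mean_le by (intro sum_nonneg) auto
    have "(\<Sum>j=1..k. 1 / real N - trunc_mean N j)
            \<le> real (card {1..k}) * (C / real N powr (2 + r) / cutoff N powr (1 + r))"
      using N by (intro sum_bounded_above mean_sub_trunc_mean_le) auto
    also have "\<dots> = real k * (C / real N powr (2 + r) / cutoff N powr (1 + r))"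
      by simp
    also have "\<dots> \<le> bias_bound N"
      unfolding bias_bound_def using k C_pos by (intro mult_right_mono) auto
    finally show "(\<Sum>j=1..k. 1 / real N - trunc_mean N j) \<le> bias_bound N" .
  qed
  have "(\<Sum>j=1..k. t N j \<omega>) - real k / real N
          = (\<Sum>j=1..k. t N j \<omega> - trunc_mean N j) - (\<Sum>j=1..k. 1 / real N - trunc_mean N j)"
    by (simp add: sum_subtractf)
  then show ?thesis
    using deviation bias by linarith
qed

lemma AE_eventually_partial_sums_close:
  assumes \<delta>: "0 < \<delta>" "\<delta> \<le> 1"
  shows "AE \<omega> in M. eventually (\<lambda>N. \<forall>k\<in>{1..N}. \<bar>(\<Sum>j=1..k. t N j \<omega>) - real k / real N\<bar> \<le> 2 * \<delta>) sequentially"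
proof -
  have small_bias: "eventually (\<lambda>N. N \<ge> 1 \<and> bias_bound N \<le> \<delta>) sequentially"
    using order_tendstoD(2)[OF bias_bound_tendsto_zero \<delta>(1)] eventually_ge_at_top[of 1]
    by eventually_elim auto
  have "AE \<omega> in M. eventually (\<lambda>N. \<omega> \<in> space M - exceptional \<delta> N) sequentially"
    using summable_measure_exceptional[OF \<delta>] sets_exceptional
    by (intro borel_cantelli_AE1) (auto simp: less_top[symmetric])
  then show ?thesis
  proof eventually_elim
    case (elim \<omega>)
    from elim small_bias show ?case
      by eventually_elim (use partial_sum_close_outside_exceptional in fastforce)
  qed
qed

lemma AE_partial_sums_uniformly_close:
  "AE \<omega> in M. \<forall>\<epsilon>>0. eventually (\<lambda>N. \<forall>k\<in>{1..N}. \<bar>(\<Sum>j=1..k. t N j \<omega>) - real k / real N\<bar> \<le> \<epsilon>) sequentially"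
proof -
  have "AE \<omega> in M. \<forall>n. eventually (\<lambda>N. \<forall>k\<in>{1..N}.
          \<bar>(\<Sum>j=1..k. t N j \<omega>) - real k / real N\<bar> \<le> 2 * (1 / real (Suc n))) sequentially"
    unfolding AE_all_countable by (intro allI AE_eventually_partial_sums_close) auto
  then show ?thesis
  proof eventually_elim
    case (elim \<omega>)
    show ?case
    proof (intro allI impI)
      fix \<epsilon> :: real assume "\<epsilon> > 0"
      then obtain n where "inverse (real (Suc n)) < \<epsilon> / 2"
        using reals_Archimedean[of "\<epsilon> / 2"] by auto
      then have "2 * (1 / real (Suc n)) \<le> \<epsilon>"
        by (simp add: field_simps)
      with elim[rule_format, of n] show "eventually (\<lambda>N. \<forall>k\<in>{1..N}. \<bar>(\<Sum>j=1..k. t N j \<omega>) - real k / real N\<bar> \<le> \<epsilon>) sequentially"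
        by (auto elim!: eventually_mono)
    qed
  qed
qed

end

theorem proposition4p5:
  fixes M :: "'a measure" and t :: "nat \<Rightarrow> nat \<Rightarrow> 'a \<Rightarrow> real"
    and r C :: real
  assumes "prob_space M"
    and meas: "\<And>N j. N \<ge> 1 \<Longrightarrow> j \<ge> 1 \<Longrightarrow> t N j \<in> borel_measurable M"
    and pos: "\<And>N j \<omega>. N \<ge> 1 \<Longrightarrow> j \<ge> 1 \<Longrightarrow> \<omega> \<in> space M \<Longrightarrow> t N j \<omega> > 0"
    and mean: "\<And>N j. N \<ge> 1 \<Longrightarrow> j \<ge> 1 \<Longrightarrow>
                 integrable M (t N j) \<and> (\<integral>\<omega>. t N j \<omega> \<partial>M) = 1 / real N"
    and r_pos: "r > 0" and C_pos: "C > 0"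
    and moment: "\<And>N j. N \<ge> 1 \<Longrightarrow> j \<ge> 1 \<Longrightarrow>
                 (\<integral>\<^sup>+\<omega>. ennreal (t N j \<omega> powr (2 + r)) \<partial>M)
                   \<le> ennreal (C / real N powr (2 + r))"
    and nsd: "\<And>N m. N \<ge> 1 \<Longrightarrow> NSD M (t N) m"
  shows "AE \<omega> in M.
           (\<lambda>N. (1 / real N) * (\<Sum>k=1..N. (\<Sum>j=1..k. t N j \<omega>)\<^sup>2))
             \<longlonglongrightarrow> 1 / 3"
proof -
  interpret nsd_triangular_array M t r C
    by (intro nsd_triangular_array.intro nsd_triangular_array_axioms.intro assms)
  from AE_partial_sums_uniformly_close show ?thesis
    by eventually_elim (rule tendsto_mean_square_of_uniformly_close, blast)
qed

end
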